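(* Let $\mathcal M=(M,\le,{}^\perp)$ be a complete orthomodular lattice, $L$ an involutive submonoid of $\mathbf{Lin}(\mathcal M)$ containing all Sasaki projections, and $\mathscr P(L)=(\mathscr P(L),\bigcup,\odot,{}^*,{\sim},\{\mathrm{id}_M\})$ the corresponding involutive generalized dynamic algebra. Then $\mathscr P(L)$ is a semi-Foulis dynamic algebra.
   Context: For an orthomodular lattice and $m\in M$, $\pi_m(x)=m\wedge(m^\perp\vee x)$. A map $f\colon M\to M$ is linear if there is $g\colon M\to M$ (unique, written $f^*$) with $f(x)\le y^\perp\iff x\le g(y)^\perp$ for all $x,y$. $\mathbf{Lin}(\mathcal M)$ is the involutive monoid of linear maps under composition, $f\mapsto f^*$, $\mathrm{id}_M$. $\mathscr P(L)$ is the powerset of $L$ with union, $A\odot B=\{a\circ b\}$, $A^*=\{a^*\mid a\in A\}$, ${\sim}A=\{\pi_{(\bigvee_{a\in A}a(1))^\perp}\}$. An involutive generalized dynamic algebra $(K,\bigsqcup,\odot,{}^*,{\sim},e)$ has test set $\widetilde K=\{{\sim}k\}$, joins $\bigvee W={\sim}{\sim}(\bigsqcup W)$ on $\widetilde K$, $w^\perp={\sim}w$, and $k\preceq l$ iff $\bigvee\{k,l\}=l$; it is a semi-Foulis dynamic algebra if $(\widetilde K,\preceq,{}^\perp)$ is a complete orthomodular lattice. *)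

theory Defs
  imports Main
begin

definition is_lub :: "'a set \<Rightarrow> ('a \<Rightarrow> 'a \<Rightarrow> bool) \<Rightarrow> 'a set \<Rightarrow> 'a \<Rightarrow> bool" where
  "is_lub A le S x \<longleftrightarrow> x \<in> A \<and> (\<forall>s\<in>S. le s x) \<and> (\<forall>y\<in>A. (\<forall>s\<in>S. le s y) \<longrightarrow> le x y)"

definition cjoin :: "'a set \<Rightarrow> ('a \<Rightarrow> 'a \<Rightarrow> bool) \<Rightarrow> 'a set \<Rightarrow> 'a" where
  "cjoin A le S = (THE x. is_lub A le S x)"

definition complete_lattice_on :: "'a set \<Rightarrow> ('a \<Rightarrow> 'a \<Rightarrow> bool) \<Rightarrow> bool" where
  "complete_lattice_on A le \<longleftrightarrow>
     (\<forall>x\<in>A. le x x) \<and>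
     (\<forall>x\<in>A. \<forall>y\<in>A. le x y \<longrightarrow> le y x \<longrightarrow> x = y) \<and>
     (\<forall>x\<in>A. \<forall>y\<in>A. \<forall>z\<in>A. le x y \<longrightarrow> le y z \<longrightarrow> le x z) \<and>
     (\<forall>S. S \<subseteq> A \<longrightarrow> (\<exists>x. is_lub A le S x))"

definition orthocomplementation_on :: "'a set \<Rightarrow> ('a \<Rightarrow> 'a \<Rightarrow> bool) \<Rightarrow> ('a \<Rightarrow> 'a) \<Rightarrow> bool" where
  "orthocomplementation_on A le oc \<longleftrightarrow>
     (\<forall>x\<in>A. oc x \<in> A) \<and>
     (\<forall>x\<in>A. oc (oc x) = x) \<and>
     (\<forall>x\<in>A. \<forall>y\<in>A. le x y \<longrightarrow> le (oc y) (oc x)) \<and>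
     (\<forall>x\<in>A. \<forall>z\<in>A. le z x \<longrightarrow> le z (oc x) \<longrightarrow> (\<forall>w\<in>A. le z w))"

text \<open>Orthomodular law: x \<le> y implies y = x join (y meet oc x), where y meet oc x = oc (oc y join x).\<close>
definition complete_OML_on :: "'a set \<Rightarrow> ('a \<Rightarrow> 'a \<Rightarrow> bool) \<Rightarrow> ('a \<Rightarrow> 'a) \<Rightarrow> bool" where
  "complete_OML_on A le oc \<longleftrightarrow>
     complete_lattice_on A le \<and> orthocomplementation_on A le oc \<and>
     (\<forall>x\<in>A. \<forall>y\<in>A. le x y \<longrightarrow>
        y = cjoin A le {x, oc (cjoin A le {oc y, x})})"

definition sasaki :: "('m::complete_lattice \<Rightarrow> 'm) \<Rightarrow> 'm \<Rightarrow> 'm \<Rightarrow> 'm" where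
  "sasaki oc m x = inf m (sup (oc m) x)"

definition lin_adjoint_pair :: "('m::complete_lattice \<Rightarrow> 'm) \<Rightarrow> ('m \<Rightarrow> 'm) \<Rightarrow> ('m \<Rightarrow> 'm) \<Rightarrow> bool" where
  "lin_adjoint_pair oc f g \<longleftrightarrow> (\<forall>x y. f x \<le> oc y \<longleftrightarrow> x \<le> oc (g y))"

definition lin_map :: "('m::complete_lattice \<Rightarrow> 'm) \<Rightarrow> ('m \<Rightarrow> 'm) \<Rightarrow> bool" where
  "lin_map oc f \<longleftrightarrow> (\<exists>g. lin_adjoint_pair oc f g)"

definition lin_adj :: "('m::complete_lattice \<Rightarrow> 'm) \<Rightarrow> ('m \<Rightarrow> 'm) \<Rightarrow> ('m \<Rightarrow> 'm)" where
  "lin_adj oc f = (THE g. lin_adjoint_pair oc f g)"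

definition Lin :: "('m::complete_lattice \<Rightarrow> 'm) \<Rightarrow> ('m \<Rightarrow> 'm) set" where
  "Lin oc = {f. lin_map oc f}"

definition involutive_submonoid_Lin :: "('m::complete_lattice \<Rightarrow> 'm) \<Rightarrow> ('m \<Rightarrow> 'm) set \<Rightarrow> bool" where
  "involutive_submonoid_Lin oc L \<longleftrightarrow>
     L \<subseteq> Lin oc \<and> id \<in> L \<and> (\<forall>f\<in>L. \<forall>g\<in>L. f \<circ> g \<in> L) \<and> (\<forall>f\<in>L. lin_adj oc f \<in> L)"

definition P_odot :: "('m \<Rightarrow> 'm) set \<Rightarrow> ('m \<Rightarrow> 'm) set \<Rightarrow> ('m \<Rightarrow> 'm) set" where
  "P_odot A B = {a \<circ> b | a b. a \<in> A \<and> b \<in> B}"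

definition P_star :: "('m::complete_lattice \<Rightarrow> 'm) \<Rightarrow> ('m \<Rightarrow> 'm) set \<Rightarrow> ('m \<Rightarrow> 'm) set" where
  "P_star oc A = lin_adj oc ` A"

definition P_neg :: "('m::complete_lattice \<Rightarrow> 'm) \<Rightarrow> ('m \<Rightarrow> 'm) set \<Rightarrow> ('m \<Rightarrow> 'm) set" where
  "P_neg oc A = {sasaki oc (oc (SUP a\<in>A. a top))}"

definition tests :: "'k set \<Rightarrow> ('k \<Rightarrow> 'k) \<Rightarrow> 'k set" where
  "tests K neg = neg ` K"

definition test_join :: "('k set \<Rightarrow> 'k) \<Rightarrow> ('k \<Rightarrow> 'k) \<Rightarrow> 'k set \<Rightarrow> 'k" where
  "test_join bigsq neg W = neg (neg (bigsq W))"

definition test_le :: "('k set \<Rightarrow> 'k) \<Rightarrow> ('k \<Rightarrow> 'k) \<Rightarrow> 'k \<Rightarrow> 'k \<Rightarrow> bool" where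
  "test_le bigsq neg k l \<longleftrightarrow> test_join bigsq neg {k, l} = l"

definition semi_Foulis_dynamic_algebra :: "'k set \<Rightarrow> ('k set \<Rightarrow> 'k) \<Rightarrow> ('k \<Rightarrow> 'k) \<Rightarrow> bool" where
  "semi_Foulis_dynamic_algebra K bigsq neg \<longleftrightarrow>
     complete_OML_on (tests K neg) (test_le bigsq neg) neg"

end

theory Submission
  imports Defs
begin

(* Since pi_m top = m, the Sasaki projection pi_m determines m, and the negation of P(L)
   sends every set A of maps to the singleton {pi_n} with n the complement of the join of
   the a top, a in A.  Hence the tests of P(L) are exactly the singletons {pi_m}, with
   ~{pi_m} = {pi_(m^perp)} and ~~({pi_a} Un {pi_b}) = {pi_(a join b)}: the map m |-> {pi_m}
   is an order isomorphism from M onto the tests that carries the orthocomplement of M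
   to ~.  Being a complete orthomodular lattice is transported along such a map. *)

lemma is_lub_unique:
  assumes "complete_lattice_on A le" "is_lub A le S x" "is_lub A le S y"
  shows "x = y"
proof -
  have "le x y" "le y x" "x \<in> A" "y \<in> A"
    using assms(2,3) unfolding is_lub_def by auto
  then show ?thesis
    using assms(1) unfolding complete_lattice_on_def by blast
qed

lemma cjoin_eqI:
  assumes "complete_lattice_on A le" "is_lub A le S x"
  shows "cjoin A le S = x"
  unfolding cjoin_def using assms by (blast intro: the_equality is_lub_unique)

lemma is_lub_image_iff:
  assumes "\<And>x y. le' (\<phi> x) (\<phi> y) \<longleftrightarrow> le x y"
  shows "is_lub (range \<phi>) le' (\<phi> ` S) (\<phi> x) \<longleftrightarrow> is_lub UNIV le S x"
  using assms unfolding is_lub_def by simp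

lemma complete_lattice_on_image:
  assumes le_iff: "\<And>x y. le' (\<phi> x) (\<phi> y) \<longleftrightarrow> le x y"
    and lattice: "complete_lattice_on UNIV le"
  shows "complete_lattice_on (range \<phi>) le'"
  unfolding complete_lattice_on_def
proof (intro conjI ballI allI impI)
  fix x y z assume "x \<in> range \<phi>" "y \<in> range \<phi>" "z \<in> range \<phi>"
  then obtain a b c where abc: "x = \<phi> a" "y = \<phi> b" "z = \<phi> c" by blast
  show "le' x x" using lattice unfolding abc le_iff complete_lattice_on_def by blast
  show "x = y" if "le' x y" "le' y x"
    using lattice that unfolding abc le_iff complete_lattice_on_def by blast
  show "le' x z" if "le' x y" "le' y z"
    using lattice that unfolding abc le_iff complete_lattice_on_def by blast
next
  fix T assume "T \<subseteq> range \<phi>"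
  then have T: "\<phi> ` (\<phi> -` T) = T" by blast
  obtain x where "is_lub UNIV le (\<phi> -` T) x"
    using lattice unfolding complete_lattice_on_def by blast
  then show "\<exists>x. is_lub (range \<phi>) le' T x"
    using is_lub_image_iff[of le' \<phi> le, OF le_iff] T by metis
qed

lemma cjoin_image:
  assumes le_iff: "\<And>x y. le' (\<phi> x) (\<phi> y) \<longleftrightarrow> le x y"
    and lattice: "complete_lattice_on UNIV le"
  shows "cjoin (range \<phi>) le' (\<phi> ` S) = \<phi> (cjoin UNIV le S)"
proof -
  obtain x where x: "is_lub UNIV le S x"
    using lattice unfolding complete_lattice_on_def by blast
  then have "is_lub (range \<phi>) le' (\<phi> ` S) (\<phi> x)"
    using is_lub_image_iff[of le' \<phi> le, OF le_iff] by blast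
  then show ?thesis
    using cjoin_eqI[OF complete_lattice_on_image[of le' \<phi> le, OF le_iff lattice]]
      cjoin_eqI[OF lattice x]
    by simp
qed

lemma orthocomplementation_on_image:
  assumes le_iff: "\<And>x y. le' (\<phi> x) (\<phi> y) \<longleftrightarrow> le x y"
    and oc_comm: "\<And>x. oc' (\<phi> x) = \<phi> (oc x)"
    and ortho: "orthocomplementation_on UNIV le oc"
  shows "orthocomplementation_on (range \<phi>) le' oc'"
  unfolding orthocomplementation_on_def
proof (intro conjI ballI impI)
  fix x y z assume "x \<in> range \<phi>" "y \<in> range \<phi>" "z \<in> range \<phi>"
  then obtain a b c where abc: "x = \<phi> a" "y = \<phi> b" "z = \<phi> c" by blast
  show "oc' x \<in> range \<phi>" unfolding abc oc_comm by simp
  show "oc' (oc' x) = x" using ortho unfolding abc oc_comm orthocomplementation_on_def by simp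
  show "le' (oc' y) (oc' x)" if "le' x y"
    using ortho that unfolding abc oc_comm le_iff orthocomplementation_on_def by blast
  show "le' x z" if "le' x y" "le' x (oc' y)"
    using ortho that unfolding abc oc_comm le_iff orthocomplementation_on_def by blast
qed

lemma complete_OML_on_image:
  assumes le_iff: "\<And>x y. le' (\<phi> x) (\<phi> y) \<longleftrightarrow> le x y"
    and oc_comm: "\<And>x. oc' (\<phi> x) = \<phi> (oc x)"
    and OML: "complete_OML_on UNIV le oc"
  shows "complete_OML_on (range \<phi>) le' oc'"
proof -
  have lattice: "complete_lattice_on UNIV le"
    and ortho: "orthocomplementation_on UNIV le oc"
    and orthomodular: "\<And>x y. le x y \<Longrightarrow> y = cjoin UNIV le {x, oc (cjoin UNIV le {oc y, x})}"
    using OML unfolding complete_OML_on_def by blast+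
  note cjoin_image' = cjoin_image[of le' \<phi> le, OF le_iff lattice]
  have "y = cjoin (range \<phi>) le' {x, oc' (cjoin (range \<phi>) le' {oc' y, x})}"
    if in_range: "x \<in> range \<phi>" "y \<in> range \<phi>" and le_xy: "le' x y" for x y
  proof -
    obtain a b where ab: "x = \<phi> a" "y = \<phi> b" using in_range by blast
    have "cjoin (range \<phi>) le' {oc' y, x} = \<phi> (cjoin UNIV le {oc b, a})"
      using cjoin_image'[of "{oc b, a}"] by (simp add: ab oc_comm)
    then have "{x, oc' (cjoin (range \<phi>) le' {oc' y, x})} = \<phi> ` {a, oc (cjoin UNIV le {oc b, a})}"
      by (simp add: ab oc_comm)
    then have "cjoin (range \<phi>) le' {x, oc' (cjoin (range \<phi>) le' {oc' y, x})}
        = \<phi> (cjoin UNIV le {a, oc (cjoin UNIV le {oc b, a})})"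
      by (simp only: cjoin_image')
    also have "\<dots> = y"
      using orthomodular[of a b] le_xy by (simp add: ab le_iff)
    finally show ?thesis by simp
  qed
  then show ?thesis
    unfolding complete_OML_on_def
    using complete_lattice_on_image[of le' \<phi> le, OF le_iff lattice]
      orthocomplementation_on_image[of le' \<phi> le, OF le_iff oc_comm ortho]
    by blast
qed

lemma complete_OML_on_oc_oc:
  assumes "complete_OML_on A le oc" "x \<in> A"
  shows "oc (oc x) = x"
  using assms unfolding complete_OML_on_def orthocomplementation_on_def by blast

lemma sasaki_apply_top [simp]: "sasaki oc m top = m"
  unfolding sasaki_def by simp

lemma inj_sasaki: "inj (sasaki oc)"
  by (metis injI sasaki_apply_top)

lemma P_neg_image_sasaki: "P_neg oc (sasaki oc ` S) = {sasaki oc (oc (Sup S))}"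
  unfolding P_neg_def by (simp add: image_image)

lemma P_neg_singleton_sasaki: "P_neg oc {sasaki oc m} = {sasaki oc (oc m)}"
  using P_neg_image_sasaki[of oc "{m}"] by simp

lemma test_le_sasaki_iff:
  assumes "\<And>x. oc (oc x) = x"
  shows "test_le Union (P_neg oc) {sasaki oc a} {sasaki oc b} \<longleftrightarrow> a \<le> b"
proof -
  have "test_join Union (P_neg oc) {{sasaki oc a}, {sasaki oc b}} = {sasaki oc (sup a b)}"
    using P_neg_image_sasaki[of oc "{a, b}"] P_neg_image_sasaki[of oc "{oc (sup a b)}"]
    unfolding test_join_def by (simp add: assms insert_commute)
  then show ?thesis
    unfolding test_le_def by (simp add: inj_eq[OF inj_sasaki] le_iff_sup)
qed

lemma tests_Pow_P_neg:
  assumes "\<And>x. oc (oc x) = x" and "\<forall>m. sasaki oc m \<in> L"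
  shows "tests (Pow L) (P_neg oc) = range (\<lambda>m. {sasaki oc m})"
proof
  show "tests (Pow L) (P_neg oc) \<subseteq> range (\<lambda>m. {sasaki oc m})"
    unfolding tests_def P_neg_def by blast
  have "{sasaki oc m} = P_neg oc {sasaki oc (oc m)}" for m
    by (simp add: P_neg_singleton_sasaki assms(1))
  then show "range (\<lambda>m. {sasaki oc m}) \<subseteq> tests (Pow L) (P_neg oc)"
    unfolding tests_def using assms(2) by blast
qed

theorem theorem3p11:
  fixes oc :: "'m::complete_lattice \<Rightarrow> 'm"
    and L :: "('m \<Rightarrow> 'm) set"
  assumes "complete_OML_on UNIV (\<le>) oc"
    and "involutive_submonoid_Lin oc L"
    and "\<forall>m. sasaki oc m \<in> L"
  shows "semi_Foulis_dynamic_algebra (Pow L) Union (P_neg oc)"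
proof -
  have oc_oc: "oc (oc x) = x" for x
    using complete_OML_on_oc_oc[OF assms(1)] by simp
  have "complete_OML_on (range (\<lambda>m. {sasaki oc m})) (test_le Union (P_neg oc)) (P_neg oc)"
    by (rule complete_OML_on_image[OF _ _ assms(1)])
      (simp_all add: test_le_sasaki_iff[OF oc_oc] P_neg_singleton_sasaki)
  then show ?thesis
    unfolding semi_Foulis_dynamic_algebra_def tests_Pow_P_neg[OF oc_oc assms(3)] .
qed

end
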